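(* The finite Hilbert transform $T_2\colon L^2(-1,1)\to L^2(-1,1)$ has no continuous, $L^2$-valued extension to any genuinely larger Banach function space; that is, there is no Banach function space $Z$ with $L^2(-1,1)\subsetneq Z\subseteq L^1(-1,1)$ such that $T$ maps $Z$ continuously into $L^2(-1,1)$.
   Context: We work on $(-1,1)$ with Lebesgue measure. A Banach function space is a Banach space $Z$ of (classes of) complex measurable functions with the ideal property ($f\in Z$, $|g|\le|f|$ a.e. imply $g\in Z$, $\|g\|_Z\le\|f\|_Z$) and the Fatou property (if $f_n\in Z$, $0\le f_n\uparrow f$ a.e., $\sup_n\|f_n\|_Z<\infty$, then $f\in Z$ and $\|f_n\|_Z\to\|f\|_Z$). The finite Hilbert transform of $f\in L^1(-1,1)$ is $(Tf)(t)=\lim_{\varepsilon\to0^+}\frac1\pi\big(\int_{-1}^{t-\varepsilon}+\int_{t+\varepsilon}^1\big)\frac{f(x)}{x-t}\,dx$ (exists a.e.); it maps $L^2(-1,1)$ boundedly into itself, and this operator is denoted $T_2$. *)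

theory Defs
  imports "HOL-Analysis.Analysis"
begin

text \<open>Functions are total functions real to complex; only their restriction to (-1,1)
  matters (all conditions are relative to this measure space).\<close>

abbreviation I11 :: "real measure" where
  "I11 \<equiv> lebesgue_on {-1<..<(1::real)}"

definition L1I :: "(real \<Rightarrow> complex) set" where
  "L1I = {f. integrable I11 f}"

definition L2I :: "(real \<Rightarrow> complex) set" where
  "L2I = {f. f \<in> borel_measurable I11 \<and> integrable I11 (\<lambda>x. (cmod (f x))^2)}"

definition L2norm :: "(real \<Rightarrow> complex) \<Rightarrow> real" where
  "L2norm f = sqrt (integral\<^sup>L I11 (\<lambda>x. (cmod (f x))^2))"

text \<open>Finite Hilbert transform, as a principal value limit (exists a.e. for f in L1).\<close>
definition fhilbert :: "(real \<Rightarrow> complex) \<Rightarrow> real \<Rightarrow> complex" where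
  "fhilbert f t = Lim (at_right (0::real))
     (\<lambda>\<epsilon>. complex_of_real (1 / pi) *
        (LINT x : ({-1<..<t-\<epsilon>} \<union> {t+\<epsilon><..<1}) | lebesgue. f x / complex_of_real (x - t)))"

definition banach_function_space ::
    "(real \<Rightarrow> complex) set \<Rightarrow> ((real \<Rightarrow> complex) \<Rightarrow> real) \<Rightarrow> bool" where
  "banach_function_space Z nZ \<longleftrightarrow>
     (\<forall>f\<in>Z. f \<in> borel_measurable I11) \<and>
     (\<lambda>x. 0) \<in> Z \<and>
     (\<forall>f\<in>Z. \<forall>g\<in>Z. (\<lambda>x. f x + g x) \<in> Z) \<and>
     (\<forall>c. \<forall>f\<in>Z. (\<lambda>x. c * f x) \<in> Z) \<and>
     (\<forall>f\<in>Z. 0 \<le> nZ f) \<and>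
     (\<forall>f\<in>Z. nZ f = 0 \<longleftrightarrow> (AE x in I11. f x = 0)) \<and>
     (\<forall>c. \<forall>f\<in>Z. nZ (\<lambda>x. c * f x) = cmod c * nZ f) \<and>
     (\<forall>f\<in>Z. \<forall>g\<in>Z. nZ (\<lambda>x. f x + g x) \<le> nZ f + nZ g) \<and>
     \<comment> \<open>completeness\<close>
     (\<forall>u::nat \<Rightarrow> real \<Rightarrow> complex. (\<forall>n. u n \<in> Z) \<and>
        (\<forall>e>0. \<exists>N. \<forall>m\<ge>N. \<forall>n\<ge>N. nZ (\<lambda>x. u m x - u n x) < e) \<longrightarrow>
        (\<exists>f\<in>Z. (\<lambda>n. nZ (\<lambda>x. u n x - f x)) \<longlonglongrightarrow> 0)) \<and>
     \<comment> \<open>ideal property\<close>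
     (\<forall>f\<in>Z. \<forall>g. g \<in> borel_measurable I11 \<and> (AE x in I11. cmod (g x) \<le> cmod (f x)) \<longrightarrow>
        g \<in> Z \<and> nZ g \<le> nZ f) \<and>
     \<comment> \<open>Fatou property\<close>
     (\<forall>(r::nat \<Rightarrow> real \<Rightarrow> real) (F::real \<Rightarrow> real).
        (\<forall>n. (\<lambda>x. complex_of_real (r n x)) \<in> Z) \<and>
        (AE x in I11. (\<forall>n. 0 \<le> r n x \<and> r n x \<le> r (Suc n) x) \<and> (\<lambda>n. r n x) \<longlonglongrightarrow> F x) \<and>
        bounded (range (\<lambda>n. nZ (\<lambda>x. complex_of_real (r n x)))) \<longrightarrow>
        (\<lambda>x. complex_of_real (F x)) \<in> Z \<and>
        (\<lambda>n. nZ (\<lambda>x. complex_of_real (r n x))) \<longlonglongrightarrow> nZ (\<lambda>x. complex_of_real (F x)))"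

end

theory Submission
  imports Defs
begin

text \<open>Suppose \<open>Z\<close> existed, with \<open>\<parallel>T f\<parallel>\<^sub>2 \<le> C \<parallel>f\<parallel>\<^sub>Z\<close>, and pick \<open>f \<in> Z\<close> outside \<open>L\<^sup>2\<close>. By the
  ideal property every measurable \<open>g\<close> with \<open>\<bar>g\<bar> \<le> \<bar>f\<bar>\<close> satisfies \<open>\<parallel>T g\<parallel>\<^sub>2 \<le> B\<close> for one constant \<open>B\<close>.
  Split \<open>(-1,1]\<close> into \<open>2m\<close> cells of length \<open>1/m\<close> and let \<open>g\<close> run through the \<open>2\<^sup>m\<close> signed sums
  \<open>\<Sum> \<plusminus>\<chi>\<^sub>I \<bar>f\<bar>\<close> over the cells \<open>I\<close> of one parity. Averaging \<open>\<parallel>T g\<parallel>\<^sub>2\<^sup>2\<close> over the signs removes the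
  cross terms, and on the cell next to a block \<open>I\<close> the kernel \<open>1/(x - t)\<close> has constant sign and
  modulus at least \<open>m/2\<close> on \<open>I\<close>. Hence \<open>\<Sum>\<^sub>k (\<integral>\<^bsub>cell k\<^esub> \<bar>f\<bar>)\<^sup>2 \<le> 8\<pi>\<^sup>2B\<^sup>2/m\<close> for every \<open>m\<close>.
  This forces \<open>\<bar>f\<bar> \<in> L\<^sup>2\<close>: a bounded truncation \<open>H\<close> of \<open>\<bar>f\<bar>\<close> is \<open>L\<^sup>1\<close>-close to a continuous function,
  which is nearly constant on small cells, so \<open>\<integral> H\<^sup>2 \<le> 8\<pi>\<^sup>2B\<^sup>2\<close>, and monotone convergence concludes.\<close>

section \<open>Lebesgue measure on \<open>(-1,1)\<close>\<close>

lemma measurable_ident_lebesgue_on [measurable]: "(\<lambda>x::real. x) \<in> borel_measurable (lebesgue_on S)"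
  using id_borel_measurable_lebesgue_on unfolding id_def .

lemma finite_measure_I11: "finite_measure I11"
  by (rule finite_measure_lebesgue_on) simp

lemma integrable_const_I11 [simp]: "integrable I11 (\<lambda>x. c :: real)"
  using finite_measure.integrable_const[OF finite_measure_I11] .

lemma integrable_bounded_I11:
  fixes f :: "real \<Rightarrow> real"
  assumes "f \<in> borel_measurable I11" "\<And>x. \<bar>f x\<bar> \<le> B"
  shows "integrable I11 f"
  by (rule finite_measure.integrable_const_bound[OF finite_measure_I11, where B=B]) (use assms in auto)

lemma integrable_indicator_mult:
  fixes f :: "'a \<Rightarrow> real"
  assumes "integrable M f" "(indicator A :: 'a \<Rightarrow> real) \<in> borel_measurable M"
  shows "integrable M (\<lambda>x. indicator A x * f x)"
proof (rule Bochner_Integration.integrable_bound[OF assms(1)])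
  show "(\<lambda>x. indicator A x * f x) \<in> borel_measurable M"
    using borel_measurable_times[OF assms(2) borel_measurable_integrable[OF assms(1)]] .
qed (auto simp: indicator_def)

lemma measure_I11_interval:
  assumes "-1 \<le> u" "u \<le> v" "v \<le> 1"
  shows "measure I11 ({u<..<v} \<inter> space I11) = v - u"
proof -
  have "{u<..<v} \<inter> space I11 = {u<..<v}"
    using assms by auto
  moreover have "measure I11 {u<..<v} = v - u"
    using assms by (subst measure_restrict_space) auto
  ultimately show ?thesis
    by simp
qed

lemma integral_le_bound_I11:
  fixes f :: "real \<Rightarrow> real"
  assumes "integrable I11 f" "\<And>x. f x \<le> M"
  shows "integral\<^sup>L I11 f \<le> 2 * M"
proof -
  have "integral\<^sup>L I11 f \<le> integral\<^sup>L I11 (\<lambda>_. M)"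
    using assms by (intro Bochner_Integration.integral_mono) auto
  also have "\<dots> = 2 * M"
    using measure_I11_interval[of "-1" 1] by simp
  finally show ?thesis .
qed

lemma sum_indicator_le_1_if_disjoint:
  assumes "disjoint_family_on A P" "finite P"
  shows "(\<Sum>i\<in>P. indicator (A i) x :: real) \<le> 1"
proof (cases "\<exists>j\<in>P. x \<in> A j")
  case True
  then obtain j where "j \<in> P" "x \<in> A j" by blast
  then show ?thesis using sum_indicator_disjoint_family[OF assms(1), of x j "\<lambda>_. 1::real"] assms(2) by simp
qed (auto simp: indicator_def)

lemma sum_interval_lengths_le_integral:
  fixes \<phi> :: "real \<Rightarrow> real" and u v a :: "nat \<Rightarrow> real"
  assumes \<phi>: "integrable I11 \<phi>" "\<And>t. 0 \<le> \<phi> t"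
    and J: "\<And>j. j < m \<Longrightarrow> -1 \<le> u j \<and> u j \<le> v j \<and> v j \<le> 1"
    and disj: "disjoint_family_on (\<lambda>j. {u j<..<v j}) {..<m}"
    and lower: "\<And>j t. j < m \<Longrightarrow> u j < t \<Longrightarrow> t < v j \<Longrightarrow> a j \<le> \<phi> t"
  shows "(\<Sum>j<m. (v j - u j) * a j) \<le> integral\<^sup>L I11 \<phi>"
proof -
  have int: "integrable I11 (\<lambda>t. indicator {u j<..<v j} t * \<phi> t)" for j
    by (rule integrable_indicator_mult[OF \<phi>(1)]) measurable
  have "(v j - u j) * a j \<le> integral\<^sup>L I11 (\<lambda>t. indicator {u j<..<v j} t * \<phi> t)" if "j < m" for j
  proof -
    have "(v j - u j) * a j = integral\<^sup>L I11 (\<lambda>t. indicator {u j<..<v j} t * a j)"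
      using measure_I11_interval[of "u j" "v j"] J[OF that] by simp
    also have "\<dots> \<le> integral\<^sup>L I11 (\<lambda>t. indicator {u j<..<v j} t * \<phi> t)"
      by (rule Bochner_Integration.integral_mono[OF integrable_indicator_mult int])
        (auto simp: indicator_def lower[OF that])
    finally show ?thesis .
  qed
  then have "(\<Sum>j<m. (v j - u j) * a j) \<le> (\<Sum>j<m. integral\<^sup>L I11 (\<lambda>t. indicator {u j<..<v j} t * \<phi> t))"
    by (rule sum_mono) simp
  also have "\<dots> = integral\<^sup>L I11 (\<lambda>t. (\<Sum>j<m. indicator {u j<..<v j} t) * \<phi> t)"
    unfolding sum_distrib_right by (rule Bochner_Integration.integral_sum[symmetric]) (rule int)
  also have "\<dots> \<le> integral\<^sup>L I11 \<phi>"
  proof (rule Bochner_Integration.integral_mono)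
    show "integrable I11 (\<lambda>t. (\<Sum>j<m. indicator {u j<..<v j} t) * \<phi> t)"
      unfolding sum_distrib_right by (rule Bochner_Integration.integrable_sum) (rule int)
    show "(\<Sum>j<m. indicator {u j<..<v j} t) * \<phi> t \<le> \<phi> t" for t
      using mult_right_mono[OF sum_indicator_le_1_if_disjoint[OF disj] \<phi>(2)] by simp
  qed (rule \<phi>(1))
  finally show ?thesis .
qed

section \<open>A grid of \<open>2m\<close> cells\<close>

definition grid_point :: "nat \<Rightarrow> nat \<Rightarrow> real" where
  "grid_point m k = -1 + real k / real m"

definition cell :: "nat \<Rightarrow> nat \<Rightarrow> real set" where
  "cell m k = {grid_point m k<..grid_point m (Suc k)}"

lemma grid_point_Suc: "grid_point m (Suc k) = grid_point m k + 1 / real m"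
  by (simp add: grid_point_def add_divide_distrib)

lemma grid_point_bounds:
  assumes "m > 0" "k \<le> 2 * m"
  shows "-1 \<le> grid_point m k" "grid_point m k \<le> 1"
  using assms by (simp_all add: grid_point_def field_simps)

lemma mem_cell_iff: "m > 0 \<Longrightarrow> x \<in> cell m k \<longleftrightarrow> real k < (x + 1) * m \<and> (x + 1) * m \<le> real k + 1"
  by (simp add: cell_def grid_point_def field_simps)

lemma indicator_cell_measurable [measurable]:
  "(indicator (cell m k) :: real \<Rightarrow> real) \<in> borel_measurable (lebesgue_on S)"
  unfolding cell_def by measurable

lemma cell_diameter: "x \<in> cell m k \<Longrightarrow> y \<in> cell m k \<Longrightarrow> \<bar>x - y\<bar> \<le> 1 / real m"
  by (auto simp: cell_def grid_point_Suc)

lemma disjoint_family_cell: "m > 0 \<Longrightarrow> disjoint_family (cell m)"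
  unfolding disjoint_family_on_def by (auto simp: mem_cell_iff)

lemma cell_disjoint: "m > 0 \<Longrightarrow> k \<noteq> k' \<Longrightarrow> cell m k \<inter> cell m k' = {}"
  using disjoint_family_cell unfolding disjoint_family_on_def by blast

lemma cell_cover:
  assumes "m > 0" "-1 < x" "x < 1"
  shows "\<exists>k<2*m. x \<in> cell m k"
proof -
  define k where "k = nat \<lceil>(x + 1) * m\<rceil> - 1"
  have "0 < (x + 1) * m" "(x + 1) * m < 2 * m"
    using assms by simp_all
  then have "1 \<le> \<lceil>(x + 1) * m\<rceil>" "\<lceil>(x + 1) * m\<rceil> \<le> 2 * m"
    using assms by (simp_all add: ceiling_le_iff le_ceiling_iff)
  then have "k < 2 * m" "real k = \<lceil>(x + 1) * m\<rceil> - 1"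
    unfolding k_def by linarith+
  moreover have "x \<in> cell m k"
    using calculation(2) ceiling_correct[of "(x + 1) * m"] assms(1) by (simp add: mem_cell_iff)
  ultimately show ?thesis
    by blast
qed

lemma sum_indicator_cell:
  assumes "m > 0" "-1 < x" "x < 1"
  shows "(\<Sum>k<2*m. indicator (cell m k) x :: real) = 1"
proof -
  obtain j where "j < 2 * m" "x \<in> cell m j"
    using cell_cover[OF assms] by blast
  then show ?thesis
    using sum_indicator_disjoint_family[of "cell m" "{..<2*m}" x j "\<lambda>_. 1::real"]
      disjoint_family_on_mono[OF subset_UNIV disjoint_family_cell[OF assms(1)]] by simp
qed

definition cell_integral :: "nat \<Rightarrow> nat \<Rightarrow> (real \<Rightarrow> real) \<Rightarrow> real" where
  "cell_integral m k f = integral\<^sup>L I11 (\<lambda>x. indicator (cell m k) x * f x)"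

lemma integrable_indicator_cell_mult:
  "integrable I11 f \<Longrightarrow> integrable I11 (\<lambda>x. indicator (cell m k) x * f x :: real)"
  by (rule integrable_indicator_mult) measurable

lemma integral_sum_cells:
  fixes \<phi> :: "real \<Rightarrow> real"
  assumes "m > 0" "integrable I11 \<phi>"
  shows "integral\<^sup>L I11 \<phi> = (\<Sum>k<2*m. cell_integral m k \<phi>)"
proof -
  have "integral\<^sup>L I11 \<phi> = integral\<^sup>L I11 (\<lambda>x. (\<Sum>k<2*m. indicator (cell m k) x) * \<phi> x)"
    by (rule Bochner_Integration.integral_cong) (auto simp: sum_indicator_cell[OF assms(1)])
  also have "\<dots> = (\<Sum>k<2*m. integral\<^sup>L I11 (\<lambda>x. indicator (cell m k) x * \<phi> x))"
    unfolding sum_distrib_right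
    by (rule Bochner_Integration.integral_sum) (rule integrable_indicator_mult[OF assms(2)], measurable)
  finally show ?thesis
    unfolding cell_integral_def .
qed

lemma cell_integral_const:
  assumes "m > 0" "k < 2 * m"
  shows "cell_integral m k (\<lambda>_. c) = c / m"
proof -
  let ?a = "grid_point m k" and ?b = "grid_point m (Suc k)"
  have bounds: "-1 \<le> ?a" "?a \<le> ?b" "?b \<le> 1"
    using assms grid_point_bounds[of m k] grid_point_bounds[of m "Suc k"] grid_point_Suc[of m k]
    by simp_all
  have "measure I11 (cell m k \<inter> space I11) = ?b - ?a"
  proof (cases "?b < 1")
    case True
    then have "cell m k \<inter> space I11 = {?a<..?b}"
      using bounds by (auto simp: cell_def)
    then show ?thesis
      using True bounds by (subst measure_restrict_space) auto
  next
    case False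
    then have "cell m k \<inter> space I11 = {?a<..<?b} \<inter> space I11"
      using bounds by (auto simp: cell_def)
    then show ?thesis
      using measure_I11_interval[OF bounds] by simp
  qed
  then show ?thesis
    by (simp add: cell_integral_def grid_point_Suc)
qed

lemma cell_integral_mono:
  assumes "integrable I11 f" "integrable I11 g" "\<And>x. x \<in> cell m k \<Longrightarrow> x \<in> space I11 \<Longrightarrow> f x \<le> g x"
  shows "cell_integral m k f \<le> cell_integral m k g"
  unfolding cell_integral_def using assms
  by (intro Bochner_Integration.integral_mono integrable_indicator_cell_mult) (auto simp: indicator_def)

lemma cell_integral_nonneg: "(\<And>x. 0 \<le> f x) \<Longrightarrow> 0 \<le> cell_integral m k f"
  unfolding cell_integral_def by simp

lemma cell_integral_add:
  assumes "integrable I11 f" "integrable I11 g"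
  shows "cell_integral m k (\<lambda>x. f x + g x) = cell_integral m k f + cell_integral m k g"
  unfolding cell_integral_def distrib_left
  by (intro Bochner_Integration.integral_add integrable_indicator_cell_mult assms)

lemma cell_integral_cmult: "cell_integral m k (\<lambda>x. c * f x) = c * cell_integral m k f"
  unfolding cell_integral_def by (simp add: mult.left_commute)

section \<open>The Hilbert transform of signed blocks\<close>

lemma fhilbert_eq_integral_if_vanishing_near:
  assumes "u < t" "t < v" "-1 \<le> u" "v \<le> 1"
    and vanish: "\<And>x. u < x \<Longrightarrow> x < v \<Longrightarrow> g x = 0"
  shows "fhilbert g t = complex_of_real (1/pi) * integral\<^sup>L I11 (\<lambda>x. g x / complex_of_real (x - t))"
proof -
  let ?h = "\<lambda>x. g x / complex_of_real (x - t)"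
  have "(LINT x : ({-1<..<t-\<epsilon>} \<union> {t+\<epsilon><..<1}) | lebesgue. ?h x) = integral\<^sup>L I11 ?h"
    if "0 < \<epsilon>" "\<epsilon> < min (t - u) (v - t)" for \<epsilon>
  proof -
    have "(\<lambda>x. indicator ({-1<..<t-\<epsilon>} \<union> {t+\<epsilon><..<1}) x *\<^sub>R ?h x)
        = (\<lambda>x. indicator {-1<..<1} x *\<^sub>R ?h x)"
    proof
      fix x
      show "indicator ({-1<..<t-\<epsilon>} \<union> {t+\<epsilon><..<1}) x *\<^sub>R ?h x = indicator {-1<..<1} x *\<^sub>R ?h x"
        using that assms vanish[of x] by (cases "u < x \<and> x < v") (auto simp: indicator_def)
    qed
    then show ?thesis
      unfolding set_lebesgue_integral_def by (simp add: integral_restrict_space)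
  qed
  then have "\<forall>\<^sub>F \<epsilon> in at_right 0. complex_of_real (1/pi) *
      (LINT x : ({-1<..<t-\<epsilon>} \<union> {t+\<epsilon><..<1}) | lebesgue. ?h x) = complex_of_real (1/pi) * integral\<^sup>L I11 ?h"
    unfolding eventually_at_right_field using assms by (intro exI[of _ "min (t - u) (v - t)"]) auto
  then show ?thesis
    unfolding fhilbert_def by (intro tendsto_Lim trivial_limit_at_right_real tendsto_eventually)
qed

lemma fhilbert_real_sum_eq:
  fixes h :: "nat \<Rightarrow> real \<Rightarrow> real" and c :: "nat \<Rightarrow> real"
  assumes "u < t" "t < v" "-1 \<le> u" "v \<le> 1" "finite I"
    and vanish: "\<And>i x. i \<in> I \<Longrightarrow> u < x \<Longrightarrow> x < v \<Longrightarrow> h i x = 0"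
    and kernel: "\<And>i. i \<in> I \<Longrightarrow> integrable I11 (\<lambda>x. h i x / (x - t))"
  shows "fhilbert (\<lambda>x. complex_of_real (\<Sum>i\<in>I. c i * h i x)) t
    = complex_of_real (1/pi * (\<Sum>i\<in>I. c i * integral\<^sup>L I11 (\<lambda>x. h i x / (x - t))))"
proof -
  have sum: "integral\<^sup>L I11 (\<lambda>x. \<Sum>i\<in>I. c i * (h i x / (x - t)))
      = (\<Sum>i\<in>I. c i * integral\<^sup>L I11 (\<lambda>x. h i x / (x - t)))"
  proof (subst Bochner_Integration.integral_sum)
    show "integrable I11 (\<lambda>x. c i * (h i x / (x - t)))" if "i \<in> I" for i
      using kernel[OF that] by (rule integrable_mult_right)
  qed (simp only: integral_mult_right_zero)
  have "fhilbert (\<lambda>x. complex_of_real (\<Sum>i\<in>I. c i * h i x)) t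
      = complex_of_real (1/pi) * integral\<^sup>L I11 (\<lambda>x. complex_of_real (\<Sum>i\<in>I. c i * (h i x / (x - t))))"
    by (subst fhilbert_eq_integral_if_vanishing_near[OF assms(1-4)])
      (simp_all add: vanish sum_divide_distrib)
  also have "\<dots> = complex_of_real (1/pi * (\<Sum>i\<in>I. c i * integral\<^sup>L I11 (\<lambda>x. h i x / (x - t))))"
    by (simp only: integral_complex_of_real sum of_real_mult)
  finally show ?thesis .
qed

lemma integrable_indicator_mult_divide_dist:
  fixes F :: "real \<Rightarrow> real"
  assumes F: "integrable I11 F" and A: "(indicator A :: real \<Rightarrow> real) \<in> borel_measurable I11"
    and "d > 0" "\<And>x. x \<in> A \<Longrightarrow> d \<le> \<bar>x - t\<bar>"
  shows "integrable I11 (\<lambda>x. indicator A x * F x / (x - t))"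
proof (rule Bochner_Integration.integrable_bound[where f="\<lambda>x. \<bar>F x\<bar> / d"])
  note [measurable] = A borel_measurable_integrable[OF F]
  show "integrable I11 (\<lambda>x. \<bar>F x\<bar> / d)"
    using F by simp
  show "(\<lambda>x. indicator A x * F x / (x - t)) \<in> borel_measurable I11"
    by measurable
  have "\<bar>F x\<bar> / \<bar>x - t\<bar> \<le> \<bar>F x\<bar> / d" if "x \<in> A" for x
    using assms(3) assms(4)[OF that] by (intro divide_left_mono) auto
  then show "AE x in I11. norm (indicator A x * F x / (x - t)) \<le> norm (\<bar>F x\<bar> / d)"
    using assms(3) by (auto simp: indicator_def abs_mult)
qed

lemma cauchy_kernel_integral_lower_bound:
  fixes F :: "real \<Rightarrow> real"
  assumes F: "integrable I11 F" "\<And>x. 0 \<le> F x" and A: "(indicator A :: real \<Rightarrow> real) \<in> borel_measurable I11"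
    and "d > 0" "D > 0"
    and side: "(\<forall>x\<in>A. d \<le> x - t \<and> x - t \<le> D) \<or> (\<forall>x\<in>A. d \<le> t - x \<and> t - x \<le> D)"
  shows "integral\<^sup>L I11 (\<lambda>x. indicator A x * F x) / D
    \<le> \<bar>integral\<^sup>L I11 (\<lambda>x. indicator A x * F x / (x - t))\<bar>"
proof -
  have kernel: "integrable I11 (\<lambda>x. indicator A x * F x / (x - t))"
    by (rule integrable_indicator_mult_divide_dist[OF F(1) A \<open>d > 0\<close>]) (use side in auto)
  have mass: "integrable I11 (\<lambda>x. indicator A x * F x / D)"
    using integrable_indicator_mult[OF F(1) A] by simp
  from side show ?thesis
  proof
    assume right: "\<forall>x\<in>A. d \<le> x - t \<and> x - t \<le> D"
    have "F x / D \<le> F x / (x - t)" if "x \<in> A" for x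
      using right that \<open>d > 0\<close> by (intro divide_left_mono F(2)) auto
    then have "integral\<^sup>L I11 (\<lambda>x. indicator A x * F x / D)
        \<le> integral\<^sup>L I11 (\<lambda>x. indicator A x * F x / (x - t))"
      by (intro Bochner_Integration.integral_mono mass kernel) (auto simp: indicator_def)
    then show ?thesis
      by simp
  next
    assume left: "\<forall>x\<in>A. d \<le> t - x \<and> t - x \<le> D"
    have "F x / D \<le> - (F x / (x - t))" if "x \<in> A" for x
    proof -
      have "F x / D \<le> F x / (t - x)"
        using left that \<open>d > 0\<close> by (intro divide_left_mono F(2)) auto
      moreover have "F x / (x - t) = - (F x / (t - x))"
        by (metis minus_diff_eq divide_minus_right)
      ultimately show ?thesis
        by simp
    qed
    then have "integral\<^sup>L I11 (\<lambda>x. indicator A x * F x / D)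
        \<le> integral\<^sup>L I11 (\<lambda>x. - (indicator A x * F x / (x - t)))"
      by (intro Bochner_Integration.integral_mono mass) (use kernel in \<open>auto simp: indicator_def\<close>)
    then show ?thesis
      by simp
  qed
qed

lemma sum_Pow_signed_sum_square:
  fixes c :: "nat \<Rightarrow> real"
  shows "(\<Sum>S\<in>Pow {..<m}. (\<Sum>i<m. (if i \<in> S then 1 else -1) * c i)^2) = 2^m * (\<Sum>i<m. (c i)^2)"
proof (induction m)
  case 0
  then show ?case by simp
next
  case (Suc m)
  let ?X = "\<lambda>S. \<Sum>i<m. (if i \<in> S then 1 else -1) * c i"
  let ?Y = "\<lambda>S. \<Sum>i<Suc m. (if i \<in> S then 1 else -1) * c i"
  have inj: "inj_on (insert m) (Pow {..<m})"
    by (rule inj_onI) (metis Pow_iff insert_ident lessThan_iff less_irrefl subsetD)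
  have without_m: "?Y S = ?X S - c m" if "S \<in> Pow {..<m}" for S
    using that by auto
  have with_m: "?Y (insert m S) = ?X S + c m" if "S \<in> Pow {..<m}" for S
  proof -
    have "(\<Sum>i<m. (if i \<in> insert m S then 1 else -1) * c i) = ?X S"
      by (rule sum.cong) auto
    then show ?thesis by simp
  qed
  have "(\<Sum>S\<in>Pow {..<Suc m}. (?Y S)^2)
      = (\<Sum>S\<in>Pow {..<m}. (?Y S)^2) + (\<Sum>S\<in>insert m ` Pow {..<m}. (?Y S)^2)"
    unfolding lessThan_Suc Pow_insert by (rule sum.union_disjoint) auto
  also have "\<dots> = (\<Sum>S\<in>Pow {..<m}. (?X S - c m)^2 + (?X S + c m)^2)"
    unfolding sum.reindex[OF inj] sum.distrib o_def
    by (intro arg_cong2[where f="(+)"] sum.cong refl) (simp_all only: without_m with_m)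
  also have "\<dots> = 2 * (\<Sum>S\<in>Pow {..<m}. (?X S)^2) + 2 * 2^m * (c m)^2"
    by (simp add: power2_eq_square algebra_simps sum.distrib sum_distrib_left card_Pow)
  also have "\<dots> = 2^Suc m * (\<Sum>i<Suc m. (c i)^2)"
    using Suc.IH by (simp add: algebra_simps)
  finally show ?case .
qed

definition signed_blocks :: "(nat \<Rightarrow> real set) \<Rightarrow> (real \<Rightarrow> real) \<Rightarrow> nat \<Rightarrow> nat set \<Rightarrow> real \<Rightarrow> complex" where
  "signed_blocks A F m S x = complex_of_real (\<Sum>i<m. (if i \<in> S then 1 else -1) * (indicator (A i) x * F x))"

lemma signed_blocks_measurable:
  assumes "F \<in> borel_measurable I11" "\<And>i. (indicator (A i) :: real \<Rightarrow> real) \<in> borel_measurable I11"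
  shows "signed_blocks A F m S \<in> borel_measurable I11"
  unfolding signed_blocks_def using assms by measurable

lemma norm_signed_blocks_le:
  assumes "disjoint_family_on A {..<m}" "0 \<le> F x"
  shows "cmod (signed_blocks A F m S x) \<le> F x"
proof -
  have "\<bar>\<Sum>i<m. (if i \<in> S then 1 else -1) * (indicator (A i) x * F x)\<bar>
      \<le> (\<Sum>i<m. \<bar>(if i \<in> S then 1 else -1) * (indicator (A i) x * F x)\<bar>)"
    by (rule sum_abs)
  also have "\<dots> = (\<Sum>i<m. indicator (A i) x) * F x"
    unfolding sum_distrib_right by (intro sum.cong) (simp_all add: abs_mult assms(2))
  also have "\<dots> \<le> F x"
    using mult_right_mono[OF sum_indicator_le_1_if_disjoint[OF assms(1)] assms(2)] by simp
  finally show ?thesis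
    unfolding signed_blocks_def norm_of_real .
qed

lemma sum_signed_blocks_fhilbert_square_integral_le:
  fixes F :: "real \<Rightarrow> real"
  assumes "F \<in> borel_measurable I11" "\<And>x. 0 \<le> F x"
    and "\<And>i. (indicator (A i) :: real \<Rightarrow> real) \<in> borel_measurable I11" "disjoint_family_on A {..<m}"
    and bound: "\<And>g. g \<in> borel_measurable I11 \<Longrightarrow> (\<And>x. cmod (g x) \<le> F x) \<Longrightarrow>
                   fhilbert g \<in> L2I \<and> L2norm (fhilbert g) \<le> B"
  shows "integrable I11 (\<lambda>t. \<Sum>S\<in>Pow {..<m}. (cmod (fhilbert (signed_blocks A F m S) t))^2)"
    and "integral\<^sup>L I11 (\<lambda>t. \<Sum>S\<in>Pow {..<m}. (cmod (fhilbert (signed_blocks A F m S) t))^2) \<le> 2^m * B^2"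
proof -
  have sq: "integrable I11 (\<lambda>t. (cmod (fhilbert (signed_blocks A F m S) t))^2)"
    "integral\<^sup>L I11 (\<lambda>t. (cmod (fhilbert (signed_blocks A F m S) t))^2) \<le> B^2" for S
    using bound[OF signed_blocks_measurable[OF assms(1,3)] norm_signed_blocks_le[where F=F, OF assms(4,2)]]
    unfolding L2I_def L2norm_def by (auto intro: sqrt_le_D)
  then show "integrable I11 (\<lambda>t. \<Sum>S\<in>Pow {..<m}. (cmod (fhilbert (signed_blocks A F m S) t))^2)"
    by simp
  have "integral\<^sup>L I11 (\<lambda>t. \<Sum>S\<in>Pow {..<m}. (cmod (fhilbert (signed_blocks A F m S) t))^2)
      = (\<Sum>S\<in>Pow {..<m}. integral\<^sup>L I11 (\<lambda>t. (cmod (fhilbert (signed_blocks A F m S) t))^2))"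
    by (rule Bochner_Integration.integral_sum) (rule sq(1))
  also have "\<dots> \<le> (\<Sum>S\<in>Pow {..<m}. B^2)"
    by (rule sum_mono) (rule sq(2))
  also have "\<dots> = 2^m * B^2"
    by (simp add: card_Pow)
  finally show "integral\<^sup>L I11 (\<lambda>t. \<Sum>S\<in>Pow {..<m}. (cmod (fhilbert (signed_blocks A F m S) t))^2)
      \<le> 2^m * B^2" .
qed

lemma sum_signed_blocks_fhilbert_square:
  fixes F :: "real \<Rightarrow> real"
  assumes "u < t" "t < v" "-1 \<le> u" "v \<le> 1"
    and "\<And>i. i < m \<Longrightarrow> A i \<inter> {u<..<v} = {}"
    and "\<And>i. i < m \<Longrightarrow> integrable I11 (\<lambda>x. indicator (A i) x * F x / (x - t))"
  shows "(\<Sum>S\<in>Pow {..<m}. (cmod (fhilbert (signed_blocks A F m S) t))^2)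
    = 2^m / pi^2 * (\<Sum>i<m. (integral\<^sup>L I11 (\<lambda>x. indicator (A i) x * F x / (x - t)))^2)"
proof -
  let ?b = "\<lambda>i. integral\<^sup>L I11 (\<lambda>x. indicator (A i) x * F x / (x - t))"
  have vanish: "indicator (A i) x * F x = 0" if "i < m" "u < x" "x < v" for i x
    using assms(5)[OF that(1)] that(2,3) by (auto simp: disjoint_iff indicator_def)
  have T: "fhilbert (signed_blocks A F m S) t
      = complex_of_real (1/pi * (\<Sum>i<m. (if i \<in> S then 1 else -1) * ?b i))" for S
    unfolding signed_blocks_def by (rule fhilbert_real_sum_eq) (use assms(1-4,6) vanish in auto)
  have "(\<Sum>S\<in>Pow {..<m}. (cmod (fhilbert (signed_blocks A F m S) t))^2)
      = (\<Sum>S\<in>Pow {..<m}. (\<Sum>i<m. (if i \<in> S then 1 else -1) * ?b i)^2) / pi^2"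
    unfolding T norm_of_real power2_abs power_mult_distrib sum_distrib_left[symmetric]
    by (simp add: field_simps)
  then show ?thesis
    unfolding sum_Pow_signed_sum_square by simp
qed

lemma block_mass_square_le_mean_square_fhilbert:
  fixes F :: "real \<Rightarrow> real" and l r :: "nat \<Rightarrow> real"
  assumes F: "integrable I11 F" "\<And>x. 0 \<le> F x"
    and t: "u < t" "t < v" and uv: "-1 \<le> u" "v \<le> 1" and "j < m"
    and apart: "\<And>i. i < m \<Longrightarrow> {l i<..r i} \<inter> {u<..<v} = {}"
    and near: "(r j \<le> u \<and> v - l j \<le> D) \<or> (v \<le> l j \<and> r j - u \<le> D)"
    and "D > 0"
  shows "(integral\<^sup>L I11 (\<lambda>x. indicator {l j<..r j} x * F x) / D)^2
    \<le> pi^2 / 2^m * (\<Sum>S\<in>Pow {..<m}. (cmod (fhilbert (signed_blocks (\<lambda>i. {l i<..r i}) F m S) t))^2)"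
proof -
  define d where "d = min (t - u) (v - t)"
  have "d > 0"
    using t by (simp add: d_def)
  have dist: "d \<le> \<bar>x - t\<bar>" if "i < m" "x \<in> {l i<..r i}" for i x
  proof -
    have "x \<le> u \<or> v \<le> x"
      using apart[OF that(1)] that(2) by auto
    then show ?thesis
      using t by (auto simp: d_def)
  qed
  let ?b = "\<lambda>i. integral\<^sup>L I11 (\<lambda>x. indicator {l i<..r i} x * F x / (x - t))"
  have kernel: "integrable I11 (\<lambda>x. indicator {l i<..r i} x * F x / (x - t))" if "i < m" for i
    by (rule integrable_indicator_mult_divide_dist[OF F(1) _ \<open>d > 0\<close>]) (use dist that in auto)
  have "pi^2 / 2^m * (\<Sum>S\<in>Pow {..<m}. (cmod (fhilbert (signed_blocks (\<lambda>i. {l i<..r i}) F m S) t))^2)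
      = (\<Sum>i<m. (?b i)^2)"
    by (subst sum_signed_blocks_fhilbert_square[OF t]) (use uv apart kernel in auto)
  moreover have "(?b j)^2 \<le> (\<Sum>i<m. (?b i)^2)"
    using \<open>j < m\<close> by (simp add: member_le_sum[of j "{..<m}" "\<lambda>i. (?b i)^2"])
  moreover have "integral\<^sup>L I11 (\<lambda>x. indicator {l j<..r j} x * F x) / D \<le> \<bar>?b j\<bar>"
    by (rule cauchy_kernel_integral_lower_bound[OF F _ \<open>d > 0\<close> \<open>D > 0\<close>])
      (use near t in \<open>auto simp: d_def\<close>)
  moreover have "0 \<le> integral\<^sup>L I11 (\<lambda>x. indicator {l j<..r j} x * F x) / D"
    using \<open>D > 0\<close> by (simp add: F(2))
  ultimately show ?thesis
    using power_mono[of "integral\<^sup>L I11 (\<lambda>x. indicator {l j<..r j} x * F x) / D" "\<bar>?b j\<bar>" 2]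
    by simp
qed

text \<open>Block \<open>j\<close> is \<open>(l j, r j]\<close> and it is tested on \<open>(u j, v j)\<close>, which lies on one side of it with
  both intervals inside an interval of length \<open>D\<close>; so there the kernel \<open>1/(x - t)\<close> has constant
  sign and modulus at least \<open>1/D\<close> on the block.\<close>

lemma hilbert_block_estimate:
  fixes F :: "real \<Rightarrow> real" and l r u v :: "nat \<Rightarrow> real"
  assumes F: "F \<in> borel_measurable I11" "\<And>x. 0 \<le> F x" "integrable I11 F"
    and bound: "\<And>g. g \<in> borel_measurable I11 \<Longrightarrow> (\<And>x. cmod (g x) \<le> F x) \<Longrightarrow>
                   fhilbert g \<in> L2I \<and> L2norm (fhilbert g) \<le> B"
    and J: "\<And>j. j < m \<Longrightarrow> -1 \<le> u j \<and> u j < v j \<and> v j \<le> 1"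
    and I_disj: "disjoint_family_on (\<lambda>i. {l i<..r i}) {..<m}"
    and J_disj: "disjoint_family_on (\<lambda>j. {u j<..<v j}) {..<m}"
    and IJ: "\<And>i j. i < m \<Longrightarrow> j < m \<Longrightarrow> {l i<..r i} \<inter> {u j<..<v j} = {}"
    and near: "\<And>j. j < m \<Longrightarrow> (r j \<le> u j \<and> v j - l j \<le> D) \<or> (v j \<le> l j \<and> r j - u j \<le> D)"
    and "D > 0"
  shows "(\<Sum>j<m. (v j - u j) * (integral\<^sup>L I11 (\<lambda>x. indicator {l j<..r j} x * F x) / D)^2) \<le> (pi * B)^2"
proof -
  let ?g = "signed_blocks (\<lambda>i. {l i<..r i}) F m"
  define \<Phi> where "\<Phi> t = pi^2 / 2^m * (\<Sum>S\<in>Pow {..<m}. (cmod (fhilbert (?g S) t))^2)" for t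
  have "(indicator {l i<..r i} :: real \<Rightarrow> real) \<in> borel_measurable I11" for i
    by measurable
  note mean_square = sum_signed_blocks_fhilbert_square_integral_le[OF F(1,2) this I_disj bound]
  have \<Phi>_int: "integrable I11 \<Phi>"
    unfolding \<Phi>_def using mean_square(1) by (rule integrable_mult_right)
  have "integral\<^sup>L I11 \<Phi>
      = pi^2 / 2^m * integral\<^sup>L I11 (\<lambda>t. \<Sum>S\<in>Pow {..<m}. (cmod (fhilbert (?g S) t))^2)"
    unfolding \<Phi>_def by simp
  also have "\<dots> \<le> pi^2 / 2^m * (2^m * B^2)"
    using mean_square(2) by (intro mult_left_mono) simp_all
  also have "\<dots> = (pi * B)^2"
    by (simp add: power_mult_distrib)
  finally have \<Phi>_le: "integral\<^sup>L I11 \<Phi> \<le> (pi * B)^2" .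
  have lower: "(integral\<^sup>L I11 (\<lambda>x. indicator {l j<..r j} x * F x) / D)^2 \<le> \<Phi> t"
    if "j < m" "u j < t" "t < v j" for j t
    unfolding \<Phi>_def using that J[OF that(1)] IJ[OF _ that(1)] near[OF that(1)]
    by (intro block_mass_square_le_mean_square_fhilbert[OF F(3,2) _ _ _ _ _ _ _ \<open>D > 0\<close>]) auto
  have "(\<Sum>j<m. (v j - u j) * (integral\<^sup>L I11 (\<lambda>x. indicator {l j<..r j} x * F x) / D)^2) \<le> integral\<^sup>L I11 \<Phi>"
  proof (rule sum_interval_lengths_le_integral[OF \<Phi>_int _ _ J_disj lower])
    show "0 \<le> \<Phi> t" for t
      unfolding \<Phi>_def by (simp add: sum_nonneg)
    show "-1 \<le> u j \<and> u j \<le> v j \<and> v j \<le> 1" if "j < m" for j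
      using J[OF that] by linarith
  qed
  then show ?thesis
    using \<Phi>_le by (rule order_trans)
qed

text \<open>The blocks are the cells \<open>2j + p\<close>, each tested on its neighbouring cell \<open>2j + 1 - p\<close>.\<close>

lemma cell_masses_parity_estimate:
  fixes F :: "real \<Rightarrow> real"
  assumes F: "F \<in> borel_measurable I11" "\<And>x. 0 \<le> F x" "integrable I11 F"
    and bound: "\<And>g. g \<in> borel_measurable I11 \<Longrightarrow> (\<And>x. cmod (g x) \<le> F x) \<Longrightarrow>
                   fhilbert g \<in> L2I \<and> L2norm (fhilbert g) \<le> B"
    and "m > 0" "p \<le> (1::nat)"
  shows "(\<Sum>j<m. (cell_integral m (2*j+p) F)^2) \<le> 4 * pi^2 * B^2 / m"
proof -
  let ?x = "grid_point m"
  define u where "u j = ?x (2*j+1-p)" for j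
  define v where "v j = ?x (Suc (2*j+1-p))" for j
  have cells: "{?x (2*j+p)<..?x (Suc (2*j+p))} = cell m (2*j+p)" "{u j<..<v j} \<subseteq> cell m (2*j+1-p)" for j
    unfolding u_def v_def cell_def by auto
  have est: "(\<Sum>j<m. (v j - u j) * (integral\<^sup>L I11 (\<lambda>x. indicator {?x (2*j+p)<..?x (Suc (2*j+p))} x * F x)
      / (2 / m))^2) \<le> (pi * B)^2"
  proof (rule hilbert_block_estimate[OF F bound])
    show "-1 \<le> u j \<and> u j < v j \<and> v j \<le> 1" if "j < m" for j
      using that \<open>m > 0\<close> grid_point_bounds[of m "2*j+1-p"] grid_point_bounds[of m "Suc (2*j+1-p)"]
      by (simp add: u_def v_def grid_point_Suc)
    show "disjoint_family_on (\<lambda>j. {?x (2*j+p)<..?x (Suc (2*j+p))}) {..<m}"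
      unfolding cells disjoint_family_on_def using cell_disjoint[OF \<open>m > 0\<close>] by simp
    show "disjoint_family_on (\<lambda>j. {u j<..<v j}) {..<m}"
      unfolding disjoint_family_on_def
    proof (intro ballI impI)
      fix i j :: nat
      assume "i \<noteq> j"
      then have "cell m (2*i+1-p) \<inter> cell m (2*j+1-p) = {}"
        using \<open>p \<le> 1\<close> by (intro cell_disjoint[OF \<open>m > 0\<close>]) simp
      then show "{u i<..<v i} \<inter> {u j<..<v j} = {}"
        using cells(2)[of i] cells(2)[of j] by (metis Int_mono subset_empty)
    qed
    show "{?x (2*i+p)<..?x (Suc (2*i+p))} \<inter> {u j<..<v j} = {}" for i j
    proof -
      have "cell m (2*i+p) \<inter> cell m (2*j+1-p) = {}"
        using \<open>p \<le> 1\<close> by (intro cell_disjoint[OF \<open>m > 0\<close>]) presburger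
      then show ?thesis
        unfolding cells(1) using cells(2)[of j] by (metis Int_mono subset_empty order_refl)
    qed
    show "(?x (Suc (2*j+p)) \<le> u j \<and> v j - ?x (2*j+p) \<le> 2 / m) \<or>
      (v j \<le> ?x (2*j+p) \<and> ?x (Suc (2*j+p)) - u j \<le> 2 / m)" for j
      using \<open>p \<le> 1\<close> by (cases p) (simp_all add: u_def v_def grid_point_Suc)
    show "2 / real m > 0"
      using \<open>m > 0\<close> by simp
  qed
  have scale: "(v j - u j) * (y / (2 / m))^2 = y^2 * (m / 4)" for j y
    using \<open>m > 0\<close> by (simp add: u_def v_def grid_point_Suc power2_eq_square field_simps)
  from est have "(\<Sum>j<m. (cell_integral m (2*j+p) F)^2 * (m / 4)) \<le> (pi * B)^2"
    unfolding cells(1) scale cell_integral_def .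
  then show ?thesis
    unfolding sum_distrib_right[symmetric] using \<open>m > 0\<close> by (simp add: field_simps power_mult_distrib)
qed

lemma sum_lessThan_double:
  fixes f :: "nat \<Rightarrow> 'a::comm_monoid_add"
  shows "(\<Sum>k<2*m. f k) = (\<Sum>j<m. f (2*j)) + (\<Sum>j<m. f (2*j+1))"
  by (induction m) (simp_all add: mult_2 ac_simps)

lemma cell_masses_estimate:
  fixes F :: "real \<Rightarrow> real"
  assumes F: "F \<in> borel_measurable I11" "\<And>x. 0 \<le> F x" "integrable I11 F"
    and bound: "\<And>g. g \<in> borel_measurable I11 \<Longrightarrow> (\<And>x. cmod (g x) \<le> F x) \<Longrightarrow>
                   fhilbert g \<in> L2I \<and> L2norm (fhilbert g) \<le> B"
    and "m > 0"
  shows "(\<Sum>k<2*m. (cell_integral m k F)^2) \<le> 8 * pi^2 * B^2 / m"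
proof -
  have "(\<Sum>k<2*m. (cell_integral m k F)^2)
      = (\<Sum>j<m. (cell_integral m (2*j+0) F)^2) + (\<Sum>j<m. (cell_integral m (2*j+1) F)^2)"
    unfolding sum_lessThan_double by simp
  also have "\<dots> \<le> 4 * pi^2 * B^2 / m + 4 * pi^2 * B^2 / m"
    by (intro add_mono cell_masses_parity_estimate[OF F bound \<open>m > 0\<close>]) simp_all
  also have "\<dots> = 8 * pi^2 * B^2 / m"
    by simp
  finally show ?thesis .
qed

section \<open>Square integrability from small cell masses\<close>

lemma le_cell_mean_add_oscillation:
  fixes G :: "real \<Rightarrow> real"
  assumes "m > 0" "k < 2 * m" "integrable I11 G"
    and osc: "\<And>y. y \<in> cell m k \<Longrightarrow> y \<in> space I11 \<Longrightarrow> \<bar>G x - G y\<bar> \<le> \<omega>"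
  shows "G x \<le> m * cell_integral m k G + \<omega>"
proof -
  have "(G x - \<omega>) / m = cell_integral m k (\<lambda>_. G x - \<omega>)"
    using cell_integral_const[OF assms(1,2)] by simp
  also have "\<dots> \<le> cell_integral m k G"
  proof (rule cell_integral_mono[OF _ assms(3)])
    show "G x - \<omega> \<le> G y" if "y \<in> cell m k" "y \<in> space I11" for y
      using osc[OF that] by linarith
  qed simp
  finally show ?thesis
    using \<open>m > 0\<close> by (simp add: divide_le_eq algebra_simps)
qed

lemma cell_square_integral_le:
  fixes F H G :: "real \<Rightarrow> real"
  assumes "m > 0" "k < 2 * m" and "integrable I11 F"
    and H: "integrable I11 H" "integrable I11 (\<lambda>x. (H x)^2)" "\<And>x. 0 \<le> H x" "\<And>x. H x \<le> M" "\<And>x. H x \<le> F x"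
    and G: "integrable I11 G" "integrable I11 (\<lambda>x. \<bar>G x - H x\<bar>)"
    and osc: "\<And>x y. x \<in> cell m k \<Longrightarrow> y \<in> cell m k \<Longrightarrow> x \<in> space I11 \<Longrightarrow> y \<in> space I11 \<Longrightarrow>
      \<bar>G x - G y\<bar> \<le> \<omega>"
  shows "cell_integral m k (\<lambda>x. (H x)^2)
    \<le> m * (cell_integral m k F)^2 + \<omega> * cell_integral m k H + 2 * M * cell_integral m k (\<lambda>x. \<bar>G x - H x\<bar>)"
proof -
  define \<alpha> \<beta> \<gamma> \<rho> where "\<alpha> = cell_integral m k G" and "\<beta> = cell_integral m k H"
    and "\<gamma> = cell_integral m k F" and "\<rho> = cell_integral m k (\<lambda>x. \<bar>G x - H x\<bar>)"
  have G_le: "G x \<le> m * \<alpha> + \<omega>" if "x \<in> cell m k" "x \<in> space I11" for x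
    unfolding \<alpha>_def by (rule le_cell_mean_add_oscillation[OF assms(1,2) G(1)]) (use osc that in auto)
  have "H x * H x \<le> (m * \<alpha> + \<omega>) * H x + M * \<bar>G x - H x\<bar>" if "x \<in> cell m k" "x \<in> space I11" for x
  proof -
    have "H x * H x \<le> H x * (G x + \<bar>G x - H x\<bar>)"
      using H(3) by (intro mult_left_mono) auto
    also have "\<dots> = H x * G x + H x * \<bar>G x - H x\<bar>"
      by (simp add: algebra_simps)
    also have "\<dots> \<le> H x * (m * \<alpha> + \<omega>) + M * \<bar>G x - H x\<bar>"
      using G_le[OF that] H(3,4) by (intro add_mono mult_left_mono mult_right_mono) auto
    finally show ?thesis
      by (simp add: algebra_simps)
  qed
  then have "cell_integral m k (\<lambda>x. (H x)^2) \<le> cell_integral m k (\<lambda>x. (m * \<alpha> + \<omega>) * H x + M * \<bar>G x - H x\<bar>)"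
    using H G by (intro cell_integral_mono) (auto simp: power2_eq_square)
  also have "\<dots> = (m * \<alpha> + \<omega>) * \<beta> + M * \<rho>"
    using H G by (simp add: cell_integral_add cell_integral_cmult \<beta>_def \<rho>_def)
  finally have main: "cell_integral m k (\<lambda>x. (H x)^2) \<le> (m * \<alpha> + \<omega>) * \<beta> + M * \<rho>" .
  have "\<alpha> \<le> cell_integral m k (\<lambda>x. H x + \<bar>G x - H x\<bar>)"
    unfolding \<alpha>_def using H G by (intro cell_integral_mono) auto
  then have \<alpha>_le: "\<alpha> \<le> \<beta> + \<rho>"
    using H G by (simp add: cell_integral_add \<beta>_def \<rho>_def)
  have \<beta>_nonneg: "0 \<le> \<beta>" and \<rho>_nonneg: "0 \<le> \<rho>"
    unfolding \<beta>_def \<rho>_def using H(3) by (simp_all add: cell_integral_nonneg)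
  have "cell_integral m k H \<le> cell_integral m k (\<lambda>_. M)"
    using H(1,4) by (intro cell_integral_mono) auto
  then have m\<beta>_le: "m * \<beta> \<le> M"
    using \<open>m > 0\<close> by (simp add: cell_integral_const[OF assms(1,2)] \<beta>_def field_simps)
  have \<beta>_le: "\<beta> \<le> \<gamma>"
    unfolding \<beta>_def \<gamma>_def using H by (intro cell_integral_mono assms(3)) auto
  have "m * \<alpha> * \<beta> \<le> m * (\<beta> + \<rho>) * \<beta>"
    using \<alpha>_le \<beta>_nonneg by (intro mult_right_mono mult_left_mono) auto
  also have "\<dots> = m * \<beta>^2 + (m * \<beta>) * \<rho>"
    by (simp add: power2_eq_square algebra_simps)
  also have "\<dots> \<le> m * \<gamma>^2 + M * \<rho>"
    using \<beta>_le \<beta>_nonneg m\<beta>_le \<rho>_nonneg by (intro add_mono mult_left_mono mult_right_mono power_mono) auto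
  finally have "m * \<alpha> * \<beta> \<le> m * \<gamma>^2 + M * \<rho>" .
  with main show ?thesis
    unfolding \<beta>_def \<gamma>_def \<rho>_def by (simp add: algebra_simps)
qed

lemma square_integral_le_cell_masses:
  fixes F H G :: "real \<Rightarrow> real"
  assumes "m > 0" "integrable I11 F"
    and masses: "(\<Sum>k<2*m. (cell_integral m k F)^2) \<le> K / m"
    and H: "H \<in> borel_measurable I11" "\<And>x. 0 \<le> H x" "\<And>x. H x \<le> M" "\<And>x. H x \<le> F x"
    and G: "G \<in> borel_measurable I11" "\<And>x. \<bar>G x\<bar> \<le> M"
    and osc: "\<And>k x y. x \<in> cell m k \<Longrightarrow> y \<in> cell m k \<Longrightarrow> x \<in> space I11 \<Longrightarrow> y \<in> space I11 \<Longrightarrow>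
      \<bar>G x - G y\<bar> \<le> \<omega>"
    and "0 \<le> \<omega>"
  shows "integral\<^sup>L I11 (\<lambda>x. (H x)^2) \<le> K + 2 * M * \<omega> + 2 * M * integral\<^sup>L I11 (\<lambda>x. \<bar>G x - H x\<bar>)"
proof -
  note [measurable] = H(1) G(1)
  have "0 \<le> M"
    using H(2)[of 0] H(3)[of 0] by linarith
  have int_H: "integrable I11 H"
    by (rule integrable_bounded_I11[where B=M]) (use H in simp_all)
  have int_H2: "integrable I11 (\<lambda>x. (H x)^2)"
    by (rule integrable_bounded_I11[where B="M^2"]) (use H in \<open>simp_all add: power_mono\<close>)
  have int_G: "integrable I11 G"
    by (rule integrable_bounded_I11[where B=M]) (use G in simp_all)
  have int_GH: "integrable I11 (\<lambda>x. \<bar>G x - H x\<bar>)"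
  proof (rule integrable_bounded_I11[where B="2*M"])
    show "\<bar>\<bar>G x - H x\<bar>\<bar> \<le> 2 * M" for x
      using H(2,3)[of x] G(2)[of x] by (simp add: abs_le_iff)
  qed measurable
  have "integral\<^sup>L I11 (\<lambda>x. (H x)^2) = (\<Sum>k<2*m. cell_integral m k (\<lambda>x. (H x)^2))"
    by (rule integral_sum_cells[OF \<open>m > 0\<close> int_H2])
  also have "\<dots> \<le> (\<Sum>k<2*m. m * (cell_integral m k F)^2 + \<omega> * cell_integral m k H
      + 2 * M * cell_integral m k (\<lambda>x. \<bar>G x - H x\<bar>))"
    by (intro sum_mono cell_square_integral_le[OF \<open>m > 0\<close> _ assms(2) int_H int_H2 H(2-4) int_G int_GH] osc) auto
  also have "\<dots> = m * (\<Sum>k<2*m. (cell_integral m k F)^2) + \<omega> * integral\<^sup>L I11 H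
      + 2 * M * integral\<^sup>L I11 (\<lambda>x. \<bar>G x - H x\<bar>)"
    by (simp add: integral_sum_cells[OF \<open>m > 0\<close>] int_H int_GH sum.distrib sum_distrib_left)
  also have "\<dots> \<le> K + \<omega> * (2 * M) + 2 * M * integral\<^sup>L I11 (\<lambda>x. \<bar>G x - H x\<bar>)"
  proof -
    have "m * (\<Sum>k<2*m. (cell_integral m k F)^2) \<le> m * (K / m)"
      using masses by (intro mult_left_mono) auto
    moreover have "\<omega> * integral\<^sup>L I11 H \<le> \<omega> * (2 * M)"
      using integral_le_bound_I11[OF int_H H(3)] \<open>0 \<le> \<omega>\<close> by (rule mult_left_mono)
    ultimately show ?thesis
      using \<open>m > 0\<close> by simp
  qed
  finally show ?thesis
    by (simp add: algebra_simps)
qed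

lemma continuous_approximation_L1_I11:
  fixes H :: "real \<Rightarrow> real"
  assumes Hm: "H \<in> borel_measurable I11" and H: "\<And>x. 0 \<le> H x \<and> H x \<le> M" and "e > 0"
  obtains G where "continuous_on UNIV G" "\<And>x. 0 \<le> G x \<and> G x \<le> M"
    "integral\<^sup>L I11 (\<lambda>x. \<bar>G x - H x\<bar>) < e"
proof -
  have "0 \<le> M"
    using H[of 0] by linarith
  have "H measurable_on {-1<..<1}"
    using measurable_on_iff_borel_measurable[of "{-1<..<1::real}" H] Hm by simp
  then obtain N g where N: "negligible N" and gc: "\<And>n. continuous_on UNIV (g n)"
      and gl: "\<And>x. x \<notin> N \<Longrightarrow> (\<lambda>n. g n x) \<longlonglongrightarrow> (if x \<in> {-1<..<1} then H x else 0)"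
    unfolding measurable_on_def by blast
  define G where "G n x = max 0 (min M (g n x))" for n x
  have Gc: "continuous_on UNIV (G n)" for n
    unfolding G_def by (intro continuous_intros gc)
  have GM: "0 \<le> G n x \<and> G n x \<le> M" for n x
    unfolding G_def using \<open>0 \<le> M\<close> by simp
  have Gm: "G n \<in> borel_measurable I11" for n
    by (rule continuous_imp_measurable_on_sets_lebesgue) (auto intro: continuous_on_subset[OF Gc])
  have lim: "(\<lambda>n. \<bar>G n x - H x\<bar>) \<longlonglongrightarrow> 0" if "x \<notin> N" "x \<in> {-1<..<1}" for x
  proof -
    have "(\<lambda>n. G n x) \<longlonglongrightarrow> max 0 (min M (H x))"
      unfolding G_def using gl[OF that(1)] that(2) by (intro tendsto_max tendsto_min tendsto_const) simp
    moreover have "max 0 (min M (H x)) = H x"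
      using H[of x] by simp
    ultimately show ?thesis
      by (simp add: LIM_zero tendsto_rabs_zero)
  qed
  have "AE x in lebesgue. x \<notin> N"
    using AE_not_in N negligible_iff_null_sets by blast
  then have "AE x in I11. x \<notin> N"
    by (subst AE_restrict_space_iff) (auto elim!: AE_mp)
  then have AE_lim: "AE x in I11. (\<lambda>n. \<bar>G n x - H x\<bar>) \<longlonglongrightarrow> 0"
    by (rule AE_mp) (use lim in \<open>auto intro!: AE_I2\<close>)
  have "(\<lambda>n. integral\<^sup>L I11 (\<lambda>x. \<bar>G n x - H x\<bar>)) \<longlonglongrightarrow> integral\<^sup>L I11 (\<lambda>x. 0::real)"
  proof (rule integral_dominated_convergence[where w="\<lambda>x. M", OF _ _ _ AE_lim])
    show "AE x in I11. norm \<bar>G n x - H x\<bar> \<le> M" for n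
    proof (rule AE_I2)
      show "norm \<bar>G n x - H x\<bar> \<le> M" for x
        using GM[of n x] H[of x] by (simp add: abs_le_iff)
    qed
  qed (use Gm Hm in auto)
  then have "\<forall>\<^sub>F n in sequentially. integral\<^sup>L I11 (\<lambda>x. \<bar>G n x - H x\<bar>) < e"
    using \<open>e > 0\<close> by (simp add: order_tendstoD(2))
  then obtain n where "integral\<^sup>L I11 (\<lambda>x. \<bar>G n x - H x\<bar>) < e"
    by (auto dest: eventually_happens)
  then show ?thesis
    using that Gc GM by blast
qed

lemma truncation_square_integral_le:
  fixes F :: "real \<Rightarrow> real"
  assumes F: "F \<in> borel_measurable I11" "\<And>x. 0 \<le> F x" "integrable I11 F"
    and masses: "\<And>m. m > 0 \<Longrightarrow> (\<Sum>k<2*m. (cell_integral m k F)^2) \<le> K / m"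
    and "0 \<le> M"
  shows "integral\<^sup>L I11 (\<lambda>x. (min (F x) M)^2) \<le> K"
proof (rule field_le_epsilon)
  fix e :: real
  assume "e > 0"
  define H where "H x = min (F x) M" for x
  define \<omega> where "\<omega> = e / (4 * (M + 1))"
  have "\<omega> > 0"
    using \<open>e > 0\<close> \<open>0 \<le> M\<close> by (simp add: \<omega>_def)
  have H: "H \<in> borel_measurable I11" "\<And>x. 0 \<le> H x \<and> H x \<le> M"
    unfolding H_def using F(1,2) \<open>0 \<le> M\<close> by simp_all
  obtain G where "continuous_on UNIV G" and G: "\<And>x. 0 \<le> G x \<and> G x \<le> M"
    and close: "integral\<^sup>L I11 (\<lambda>x. \<bar>G x - H x\<bar>) < \<omega>"
    using continuous_approximation_L1_I11[OF H \<open>\<omega> > 0\<close>] by blast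
  then have "uniformly_continuous_on {-1..1} G"
    by (intro compact_uniformly_continuous) (auto intro: continuous_on_subset)
  then obtain d where "d > 0" and d: "\<And>x y. x \<in> {-1..1} \<Longrightarrow> y \<in> {-1..1} \<Longrightarrow> dist y x < d \<Longrightarrow> dist (G y) (G x) < \<omega>"
    unfolding uniformly_continuous_on_def using \<open>\<omega> > 0\<close> by metis
  obtain m :: nat where "1 / d < m"
    using reals_Archimedean2 by blast
  then have "m > 0"
    using \<open>d > 0\<close> by (metis of_nat_0_less_iff order.strict_trans zero_less_divide_1_iff)
  have "1 / m < d"
    using \<open>1 / d < m\<close> \<open>d > 0\<close> \<open>m > 0\<close> by (simp add: field_simps)
  have osc: "\<bar>G x - G y\<bar> \<le> \<omega>" if "x \<in> cell m k" "y \<in> cell m k" "x \<in> space I11" "y \<in> space I11" for k x y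
  proof -
    have "dist x y < d"
      using cell_diameter[OF that(1,2)] \<open>1 / m < d\<close> by (simp add: dist_real_def)
    then show ?thesis
      using d[of y x] that(3,4) by (simp add: dist_real_def)
  qed
  have "G \<in> borel_measurable I11"
    using \<open>continuous_on UNIV G\<close>
    by (intro continuous_imp_measurable_on_sets_lebesgue) (auto intro: continuous_on_subset)
  then have "integral\<^sup>L I11 (\<lambda>x. (H x)^2) \<le> K + 2 * M * \<omega> + 2 * M * integral\<^sup>L I11 (\<lambda>x. \<bar>G x - H x\<bar>)"
    using G H(2) \<open>\<omega> > 0\<close>
    by (intro square_integral_le_cell_masses[OF \<open>m > 0\<close> F(3) masses[OF \<open>m > 0\<close>] H(1) _ _ _ _ _ osc])
      (auto simp: H_def)
  also have "\<dots> \<le> K + 4 * M * \<omega>"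
    using close \<open>0 \<le> M\<close> by (simp add: mult_left_mono)
  also have "\<dots> \<le> K + e"
    using \<open>e > 0\<close> \<open>0 \<le> M\<close> by (simp add: \<omega>_def field_simps)
  finally show "integral\<^sup>L I11 (\<lambda>x. (min (F x) M)^2) \<le> K + e"
    unfolding H_def .
qed

lemma square_integrable_if_cell_masses_bounded:
  fixes F :: "real \<Rightarrow> real"
  assumes F: "F \<in> borel_measurable I11" "\<And>x. 0 \<le> F x" "integrable I11 F"
    and masses: "\<And>m. m > 0 \<Longrightarrow> (\<Sum>k<2*m. (cell_integral m k F)^2) \<le> K / m"
  shows "integrable I11 (\<lambda>x. (F x)^2)"
proof -
  note F(1)[measurable]
  define f where "f n x = (min (F x) (real n))^2" for n x
  have int: "integrable I11 (f n)" for n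
    unfolding f_def
    by (rule integrable_bounded_I11[where B="(real n)^2"]) (use F(2) in \<open>auto intro: power_mono\<close>)
  have mono: "f n x \<le> f (Suc n) x" for n x
    unfolding f_def using F(2)[of x] by (intro power_mono) auto
  have "(\<lambda>n. f n x) \<longlonglongrightarrow> (F x)^2" for x
  proof (rule tendsto_eventually)
    obtain N :: nat where "F x \<le> N"
      using real_arch_simple by blast
    then show "\<forall>\<^sub>F n in sequentially. f n x = (F x)^2"
      unfolding f_def eventually_sequentially by (intro exI[of _ N]) (auto simp: min_def)
  qed
  moreover have "incseq (\<lambda>n. integral\<^sup>L I11 (f n))"
    by (intro incseq_SucI Bochner_Integration.integral_mono int mono)
  moreover have "\<forall>n. integral\<^sup>L I11 (f n) \<le> K"
    unfolding f_def using truncation_square_integral_le[OF F masses] by simp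
  ultimately obtain L where "(\<lambda>n. integral\<^sup>L I11 (f n)) \<longlonglongrightarrow> L" and lim: "\<And>x. (\<lambda>n. f n x) \<longlonglongrightarrow> (F x)^2"
    using incseq_convergent by blast
  then show ?thesis
    by (intro integrable_monotone_convergence[OF int]) (auto intro!: AE_I2 incseq_SucI mono)
qed

section \<open>Banach function spaces\<close>

lemma banach_function_spaceD:
  assumes "banach_function_space Z nZ" "f \<in> Z"
  shows "f \<in> borel_measurable I11" "0 \<le> nZ f"
    and "g \<in> borel_measurable I11 \<Longrightarrow> (\<And>x. cmod (g x) \<le> cmod (f x)) \<Longrightarrow> g \<in> Z \<and> nZ g \<le> nZ f"
proof -
  have ideal: "\<forall>f\<in>Z. \<forall>g. g \<in> borel_measurable I11 \<and> (AE x in I11. cmod (g x) \<le> cmod (f x)) \<longrightarrow>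
      g \<in> Z \<and> nZ g \<le> nZ f"
    using assms(1) unfolding banach_function_space_def by blast
  show "f \<in> borel_measurable I11" "0 \<le> nZ f"
    using assms unfolding banach_function_space_def by blast+
  show "g \<in> Z \<and> nZ g \<le> nZ f" if "g \<in> borel_measurable I11" "\<And>x. cmod (g x) \<le> cmod (f x)"
    using ideal assms(2) that by (auto intro!: AE_I2)
qed

lemma fhilbert_bound_if_dominated:
  assumes "banach_function_space Z nZ" "f \<in> Z"
    and T: "\<And>h. h \<in> Z \<Longrightarrow> fhilbert h \<in> L2I \<and> L2norm (fhilbert h) \<le> C * nZ h"
    and "g \<in> borel_measurable I11" "\<And>x. cmod (g x) \<le> cmod (f x)"
  shows "fhilbert g \<in> L2I \<and> L2norm (fhilbert g) \<le> max C 0 * nZ f"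
proof -
  have "g \<in> Z" "nZ g \<le> nZ f"
    using banach_function_spaceD(3)[OF assms(1,2,4,5)] by auto
  moreover have "0 \<le> nZ g"
    using banach_function_spaceD(2)[OF assms(1) \<open>g \<in> Z\<close>] .
  ultimately have "C * nZ g \<le> max C 0 * nZ f"
    using order_trans[OF mult_right_mono mult_left_mono, of C "max C 0" "nZ g" "nZ f"] by simp
  with T[OF \<open>g \<in> Z\<close>] show ?thesis
    by auto
qed

theorem theorem5p3:
  shows "\<not> (\<exists>(Z :: (real \<Rightarrow> complex) set) nZ.
            banach_function_space Z nZ \<and> L2I \<subseteq> Z \<and> L2I \<noteq> Z \<and> Z \<subseteq> L1I \<and>
            (\<exists>C. \<forall>f\<in>Z. fhilbert f \<in> L2I \<and> L2norm (fhilbert f) \<le> C * nZ f))"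
proof
  assume "\<exists>(Z :: (real \<Rightarrow> complex) set) nZ.
            banach_function_space Z nZ \<and> L2I \<subseteq> Z \<and> L2I \<noteq> Z \<and> Z \<subseteq> L1I \<and>
            (\<exists>C. \<forall>f\<in>Z. fhilbert f \<in> L2I \<and> L2norm (fhilbert f) \<le> C * nZ f)"
  then obtain Z nZ C where Z: "banach_function_space Z nZ" "L2I \<subseteq> Z" "L2I \<noteq> Z" "Z \<subseteq> L1I"
    and T: "\<And>f. f \<in> Z \<Longrightarrow> fhilbert f \<in> L2I \<and> L2norm (fhilbert f) \<le> C * nZ f"
    by blast
  obtain f where "f \<in> Z" "f \<notin> L2I"
    using Z(2,3) by blast
  have f: "f \<in> borel_measurable I11" "integrable I11 f"
    using banach_function_spaceD(1)[OF Z(1) \<open>f \<in> Z\<close>] Z(4) \<open>f \<in> Z\<close> unfolding L1I_def by auto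
  let ?F = "\<lambda>x. cmod (f x)"
  have F: "?F \<in> borel_measurable I11" "\<And>x. 0 \<le> ?F x" "integrable I11 ?F"
    using f by auto
  have "(\<Sum>k<2*m. (cell_integral m k ?F)^2) \<le> 8 * pi^2 * (max C 0 * nZ f)^2 / m" if "m > 0" for m
    using fhilbert_bound_if_dominated[OF Z(1) \<open>f \<in> Z\<close> T]
    by (intro cell_masses_estimate[OF F _ that]) auto
  then have "integrable I11 (\<lambda>x. (?F x)^2)"
    by (rule square_integrable_if_cell_masses_bounded[OF F])
  with f(1) \<open>f \<notin> L2I\<close> show False
    unfolding L2I_def by simp
qed

end
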